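(* Let $N$ be the surface described in the context, with $l>0$. The configuration $((0,0),(0,\pi))$ in $N$ (two antipodal points on the circle $\{0\}\times S^1$ where $H_0$ is glued) is insecure; in particular $N$ is not a secure manifold.
   Context: Construction of $N$: let $C=[0,l]\times S^1$ be the flat cylinder of length $l>0$ and radius $1$, with points written $(t,\theta)$, $t\in[0,l]$, $\theta\in\mathbb{R}/2\pi\mathbb{Z}$. Let $H_0$ and $H_l$ be two hemispheres of the round unit sphere, and let $N$ be obtained by gluing the equator of $H_0$ isometrically to $\{0\}\times S^1$ and the equator of $H_l$ isometrically to $\{l\}\times S^1$, so that $N$ is a closed $C^1$ surface with a piecewise smooth Riemannian metric; geodesics of $N$ are the $C^1$ curves that are geodesics in each of the pieces. Conventions: a geodesic has positive finite length and is parametrized by $[0,1]$ proportionally to arclength; $G(x,y)$ is the set of geodesics from $x$ to $y$; a geodesic passes through $z$ if $z=\gamma(t)$ for some $t\in(0,1)$; $(x,y)$ is secure if there is a finite set $B$ such that every geodesic in $G(x,y)$ passes through a point of $B$, insecure otherwise; a manifold is secure if all its configurations are secure. *)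

theory Defs
  imports "HOL-Analysis.Analysis"
begin

type_synonym pt = "real \<times> real \<times> real"

text \<open>The surface N embedded isometrically in R^3 as the boundary of a capsule:
  cylinder point (t,theta) is (t, cos theta, sin theta); H_0 is the unit hemisphere
  centred at the origin with x <= 0; H_l the unit hemisphere centred at (l,0,0) with x >= l.\<close>

definition cyl_param :: "real \<Rightarrow> real \<Rightarrow> pt" where
  "cyl_param t \<theta> = (t, cos \<theta>, sin \<theta>)"

definition Cyl :: "real \<Rightarrow> pt set" where
  "Cyl l = {(x,y,z). 0 \<le> x \<and> x \<le> l \<and> y\<^sup>2 + z\<^sup>2 = 1}"

definition Hem0 :: "pt set" where
  "Hem0 = {(x,y,z). x \<le> 0 \<and> x\<^sup>2 + y\<^sup>2 + z\<^sup>2 = 1}"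

definition Heml :: "real \<Rightarrow> pt set" where
  "Heml l = {(x,y,z). l \<le> x \<and> (x - l)\<^sup>2 + y\<^sup>2 + z\<^sup>2 = 1}"

definition Nsurf :: "real \<Rightarrow> pt set" where
  "Nsurf l = Cyl l \<union> Hem0 \<union> Heml l"

definition nrm_cyl :: "pt \<Rightarrow> pt" where "nrm_cyl = (\<lambda>(x,y,z). (0,y,z))"
definition nrm_hem0 :: "pt \<Rightarrow> pt" where "nrm_hem0 = (\<lambda>(x,y,z). (x,y,z))"
definition nrm_heml :: "real \<Rightarrow> pt \<Rightarrow> pt" where "nrm_heml l = (\<lambda>(x,y,z). (x - l,y,z))"

definition pieces :: "real \<Rightarrow> (pt set \<times> (pt \<Rightarrow> pt)) set" where
  "pieces l = {(Cyl l, nrm_cyl), (Hem0, nrm_hem0), (Heml l, nrm_heml l)}"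

definition piece_geodesic :: "pt set \<Rightarrow> (pt \<Rightarrow> pt) \<Rightarrow> (real \<Rightarrow> pt) \<Rightarrow> real \<Rightarrow> real \<Rightarrow> bool" where
  "piece_geodesic P nrm \<gamma> a b \<longleftrightarrow>
     (\<forall>s\<in>{a..b}. \<gamma> s \<in> P) \<and>
     (\<exists>\<gamma>' \<gamma>''. \<forall>s\<in>{a..b}.
         (\<gamma> has_vector_derivative \<gamma>' s) (at s within {a..b}) \<and>
         (\<gamma>' has_vector_derivative \<gamma>'' s) (at s within {a..b}) \<and>
         (\<exists>c. \<gamma>'' s = c *\<^sub>R nrm (\<gamma> s)))"

definition N_geodesic :: "real \<Rightarrow> (real \<Rightarrow> pt) \<Rightarrow> bool" where
  "N_geodesic l \<gamma> \<longleftrightarrow>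
     (\<exists>\<gamma>'. (\<forall>s\<in>{0..1}. (\<gamma> has_vector_derivative \<gamma>' s) (at s within {0..1})) \<and>
           continuous_on {0..1} \<gamma>' \<and>
           (\<exists>c>0. \<forall>s\<in>{0..1}. norm (\<gamma>' s) = c)) \<and>
     (\<exists>(k::nat) (u::nat \<Rightarrow> real). u 0 = 0 \<and> u k = 1 \<and>
        (\<forall>i<k. u i < u (Suc i) \<and>
           (\<exists>(P, nrm) \<in> pieces l. piece_geodesic P nrm \<gamma> (u i) (u (Suc i)))))"

definition G :: "real \<Rightarrow> pt \<Rightarrow> pt \<Rightarrow> (real \<Rightarrow> pt) set" where
  "G l x y = {\<gamma>. N_geodesic l \<gamma> \<and> \<gamma> 0 = x \<and> \<gamma> 1 = y}"

definition passes_through :: "(real \<Rightarrow> pt) \<Rightarrow> pt \<Rightarrow> bool" where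
  "passes_through \<gamma> z \<longleftrightarrow> (\<exists>t\<in>{0<..<1}. \<gamma> t = z)"

definition secure_config :: "real \<Rightarrow> pt \<Rightarrow> pt \<Rightarrow> bool" where
  "secure_config l x y \<longleftrightarrow>
     (\<exists>B. finite B \<and> (\<forall>\<gamma>\<in>G l x y. \<exists>b\<in>B. passes_through \<gamma> b))"

definition secure_manifold :: "real \<Rightarrow> bool" where
  "secure_manifold l \<longleftrightarrow> (\<forall>x\<in>Nsurf l. \<forall>y\<in>Nsurf l. secure_config l x y)"

end

theory Submission
  imports Defs
begin

(* The two points x = (0,1,0) and y = (0,-1,0) of the seam circle where H_0 is glued
   are antipodal on the unit sphere, so they are joined by a whole one-parameter family of
   half great circles lying in H_0: for b in [-1,1] the meridian through the direction
   (-sqrt(1-b^2), 0, b).  Each meridian is a geodesic of the piece H_0 with constant speed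
   pi, hence a geodesic of N from x to y.  Two different meridians meet only at their
   endpoints: an interior point p of the meridian with parameter b determines b through
   the quantity z / sqrt(x^2 + z^2).  Consequently a finite set B can block only finitely
   many meridians, while there are infinitely many of them, so the configuration is
   insecure. *)

lemma insecure_if_separated_family:
  fixes \<gamma> :: "'i \<Rightarrow> real \<Rightarrow> pt" and label :: "pt \<Rightarrow> 'i"
  assumes infinite_index: "infinite I"
    and geodesic: "\<And>i. i \<in> I \<Longrightarrow> \<gamma> i \<in> G l x y"
    and separated: "\<And>i p. i \<in> I \<Longrightarrow> passes_through (\<gamma> i) p \<Longrightarrow> label p = i"
  shows "\<not> secure_config l x y"
proof
  assume "secure_config l x y"
  then obtain B where "finite B" and blocks: "\<forall>\<gamma>\<in>G l x y. \<exists>p\<in>B. passes_through \<gamma> p"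
    unfolding secure_config_def by blast
  have "I \<subseteq> label ` B"
  proof
    fix i assume "i \<in> I"
    then obtain p where "p \<in> B" "passes_through (\<gamma> i) p"
      using blocks geodesic by blast
    moreover have "label p = i"
      using separated \<open>i \<in> I\<close> \<open>passes_through (\<gamma> i) p\<close> by blast
    ultimately show "i \<in> label ` B" by blast
  qed
  with \<open>finite B\<close> infinite_index show False
    using finite_subset by blast
qed

definition meridian :: "real \<Rightarrow> real \<Rightarrow> pt" where
  "meridian b s = (- sqrt (1 - b\<^sup>2) * sin (pi * s), cos (pi * s), b * sin (pi * s))"

definition meridian_vel :: "real \<Rightarrow> real \<Rightarrow> pt" where
  "meridian_vel b s =
     (- sqrt (1 - b\<^sup>2) * (pi * cos (pi * s)), - (pi * sin (pi * s)), b * (pi * cos (pi * s)))"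

definition meridian_acc :: "real \<Rightarrow> real \<Rightarrow> pt" where
  "meridian_acc b s =
     (sqrt (1 - b\<^sup>2) * (pi * (pi * sin (pi * s))), - (pi * (pi * cos (pi * s))),
      - (b * (pi * (pi * sin (pi * s)))))"

lemma meridian_has_vel: "(meridian b has_vector_derivative meridian_vel b s) (at s within S)"
  unfolding meridian_def meridian_vel_def
  by (intro has_vector_derivative_Pair;
      simp only: has_real_derivative_iff_has_vector_derivative[symmetric];
      (rule derivative_eq_intros refl)+; simp)

lemma meridian_vel_has_acc: "(meridian_vel b has_vector_derivative meridian_acc b s) (at s within S)"
  unfolding meridian_acc_def meridian_vel_def
  by (intro has_vector_derivative_Pair;
      simp only: has_real_derivative_iff_has_vector_derivative[symmetric];
      (rule derivative_eq_intros refl)+; simp)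

lemma meridian_acc_normal: "meridian_acc b s = (- (pi * pi)) *\<^sub>R nrm_hem0 (meridian b s)"
  unfolding meridian_acc_def nrm_hem0_def meridian_def by (simp add: algebra_simps)

lemma sqrt_one_minus_square:
  assumes "\<bar>b\<bar> \<le> (1::real)" shows "(sqrt (1 - b\<^sup>2))\<^sup>2 = 1 - b\<^sup>2"
  using assms by (simp add: abs_square_le_1)

lemma meridian_speed:
  assumes "\<bar>b\<bar> \<le> 1" shows "norm (meridian_vel b s) = pi"
proof -
  let ?r = "sqrt (1 - b\<^sup>2)" and ?c = "cos (pi * s)" and ?s = "sin (pi * s)"
  have "norm (meridian_vel b s) = sqrt (?r\<^sup>2 * pi\<^sup>2 * ?c\<^sup>2 + pi\<^sup>2 * ?s\<^sup>2 + b\<^sup>2 * pi\<^sup>2 * ?c\<^sup>2)"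
    unfolding meridian_vel_def by (simp add: norm_Pair power_mult_distrib add.assoc)
  text \<open>The b-dependence cancels because (sqrt(1-b^2))^2 + b^2 = 1.\<close>
  also have "?r\<^sup>2 * pi\<^sup>2 * ?c\<^sup>2 + pi\<^sup>2 * ?s\<^sup>2 + b\<^sup>2 * pi\<^sup>2 * ?c\<^sup>2 = pi\<^sup>2 * (?c\<^sup>2 + ?s\<^sup>2)"
    unfolding sqrt_one_minus_square[OF assms] by algebra
  also have "?c\<^sup>2 + ?s\<^sup>2 = 1"
    by (rule sin_cos_squared_add2)
  finally show ?thesis
    by simp
qed

lemma meridian_in_Hem0:
  assumes "\<bar>b\<bar> \<le> 1" "s \<in> {0..1}" shows "meridian b s \<in> Hem0"
proof -
  have "sin (pi * s) \<ge> 0"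
    using assms by (intro sin_ge_zero) auto
  then have "- sqrt (1 - b\<^sup>2) * sin (pi * s) \<le> 0"
    using assms(1) by (simp add: abs_square_le_1)
  moreover have "(1 - b\<^sup>2) * (sin (pi * s))\<^sup>2 + (cos (pi * s))\<^sup>2 + b\<^sup>2 * (sin (pi * s))\<^sup>2 = 1"
    by (simp add: algebra_simps)
  ultimately show ?thesis
    unfolding meridian_def Hem0_def
    by (simp add: power_mult_distrib sqrt_one_minus_square[OF assms(1)])
qed

lemma meridian_piece_geodesic:
  assumes "\<bar>b\<bar> \<le> 1" shows "piece_geodesic Hem0 nrm_hem0 (meridian b) 0 1"
  unfolding piece_geodesic_def
  using meridian_in_Hem0[OF assms] meridian_has_vel meridian_vel_has_acc meridian_acc_normal
  by blast

text \<open>A single smooth piece suffices: the subdivision of [0,1] is trivial (k = 1).\<close>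

lemma meridian_N_geodesic:
  assumes "\<bar>b\<bar> \<le> 1" shows "N_geodesic l (meridian b)"
proof -
  have vel: "\<forall>s\<in>{0..1}. (meridian b has_vector_derivative meridian_vel b s) (at s within {0..1})"
    using meridian_has_vel by blast
  have "continuous_on {0..1} (meridian_vel b)"
    unfolding meridian_vel_def by (intro continuous_intros)
  moreover have "(Hem0, nrm_hem0) \<in> pieces l"
    unfolding pieces_def by simp
  ultimately show ?thesis
    unfolding N_geodesic_def
    using vel meridian_piece_geodesic[OF assms]
    using meridian_speed[OF assms] pi_gt_zero
    by (intro conjI exI[of _ "meridian_vel b"] exI[of _ pi] exI[of _ 1] exI[of _ "\<lambda>i. real i"])
       auto
qed

lemma meridian_in_G:
  assumes "\<bar>b\<bar> \<le> 1" shows "meridian b \<in> G l (cyl_param 0 0) (cyl_param 0 pi)"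
  using meridian_N_geodesic[OF assms]
  unfolding G_def meridian_def cyl_param_def by simp

text \<open>At an interior point of a meridian, the component z divided by the length of the
  (x,z)-projection recovers the parameter b.\<close>

definition meridian_label :: "pt \<Rightarrow> real" where
  "meridian_label p = snd (snd p) / sqrt ((fst p)\<^sup>2 + (snd (snd p))\<^sup>2)"

lemma meridian_label_interior:
  assumes "\<bar>b\<bar> \<le> 1" "passes_through (meridian b) p" shows "meridian_label p = b"
proof -
  obtain t where t: "t \<in> {0<..<1}" "meridian b t = p"
    using assms(2) unfolding passes_through_def by blast
  have sin_pos: "sin (pi * t) > 0"
    using t by (intro sin_gt_zero) auto
  have "(sqrt (1 - b\<^sup>2) * sin (pi * t))\<^sup>2 + (b * sin (pi * t))\<^sup>2 = (sin (pi * t))\<^sup>2"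
    by (simp add: power_mult_distrib sqrt_one_minus_square[OF assms(1)] algebra_simps)
  then have "sqrt ((sqrt (1 - b\<^sup>2) * sin (pi * t))\<^sup>2 + (b * sin (pi * t))\<^sup>2) = sin (pi * t)"
    using sin_pos by simp
  then show ?thesis
    using t sin_pos unfolding meridian_label_def meridian_def by auto
qed

theorem mainTheorem7:
  fixes l :: real
  assumes "l > 0"
  shows "\<not> secure_config l (cyl_param 0 0) (cyl_param 0 pi) \<and> \<not> secure_manifold l"
proof -
  have insecure: "\<not> secure_config l (cyl_param 0 0) (cyl_param 0 pi)"
  proof (rule insecure_if_separated_family[where I = "{-1..1}" and \<gamma> = meridian])
    show "infinite {-1..1::real}"
      by (simp add: infinite_Icc)
    show "meridian b \<in> G l (cyl_param 0 0) (cyl_param 0 pi)" if "b \<in> {-1..1}" for b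
      using that by (intro meridian_in_G) auto
    show "meridian_label p = b" if "b \<in> {-1..1}" "passes_through (meridian b) p" for b p
      using that by (intro meridian_label_interior) auto
  qed
  have "cyl_param 0 0 \<in> Nsurf l" "cyl_param 0 pi \<in> Nsurf l"
    using assms unfolding Nsurf_def Cyl_def cyl_param_def by auto
  with insecure show ?thesis
    unfolding secure_manifold_def by blast
qed

end
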